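(* Let $F:\mathbb{R}^k_+\to\mathbb{R}^k_+$ satisfy $\sup_{x\in\mathbb{R}^k_+}\|F(x)\|<\infty$. Let $M_0\in\{\{0\},\ \partial\mathbb{R}^k_+\}$ be absorbing for the nonlinear Poisson process $\{X^\varepsilon_t\}$ associated with $F$. Assume $F_i(x)>0$ for all $i$ and all $x\in\mathbb{R}^k_+\setminus M_0$. Then, for each $\varepsilon>0$, the process has at least one quasi-stationary distribution supported on $\varepsilon\mathbb{Z}^k_+\setminus M_0$. That is, there is a probability measure $\mu_\varepsilon$ on $\varepsilon\mathbb{Z}^k_+\setminus M_0$ and $\lambda_\varepsilon\in(0,1)$ with $\sum_{x}\mu_\varepsilon(x)p^\varepsilon(x,\Gamma)=\lambda_\varepsilon\mu_\varepsilon(\Gamma)$ for all $\Gamma\subset\varepsilon\mathbb{Z}^k_+\setminus M_0$.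
   Context: Let $\mathbb{R}^k_+=\{x\in\mathbb{R}^k:x_i\ge0\}$ and $\partial\mathbb{R}^k_+=\{x\in\mathbb{R}^k_+:\prod_ix_i=0\}$. For $y\in\mathbb{R}^k_+$, let $Z_1(y),Z_2(y),\dots$ be i.i.d. random vectors with independent components, the $i$-th component being Poisson distributed with mean $y_i$. Given $\varepsilon>0$ and $X^\varepsilon_0\in\varepsilon\mathbb{Z}^k_+$, the nonlinear Poisson process associated with $F$ is the Markov chain on $\varepsilon\mathbb{Z}^k_+$ defined by $X^\varepsilon_{t+1}=\varepsilon Z_{t+1}(F(X^\varepsilon_t)/\varepsilon)$ (independent Poisson draws at each step). Its transition kernel is $p^\varepsilon$. A set $M_0$ is absorbing if $p^\varepsilon(x,M_0)=1$ for $x\in M_0$. *)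

theory Defs
  imports "HOL-Analysis.Analysis" "HOL-Probability.Probability"
begin

definition pois :: "real \<Rightarrow> nat pmf" where
  "pois m = (if m \<le> 0 then return_pmf 0 else poisson_pmf m)"

definition orthant :: "(real^'k) set" where
  "orthant = {x. \<forall>i. 0 \<le> x $ i}"

definition orthant_boundary :: "(real^'k) set" where
  "orthant_boundary = {x \<in> orthant. (\<Prod>i\<in>UNIV. x $ i) = 0}"

definition lattice :: "real \<Rightarrow> (real^'k) set" where
  "lattice eps = {x. \<exists>z::'k \<Rightarrow> nat. x = (\<chi> i. eps * real (z i))}"

definition npp_kernel :: "real \<Rightarrow> (real^'k \<Rightarrow> real^'k) \<Rightarrow> real^'k \<Rightarrow> (real^'k) pmf" where
  "npp_kernel eps F x =
     map_pmf (\<lambda>z. \<chi> i. eps * real (z i)) (Pi_pmf UNIV 0 (\<lambda>i. pois ((F x $ i) / eps)))"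

end

theory Submission
  imports Defs
begin

text \<open>
  Write the chain as \<open>\<epsilon> Z\<close> with \<open>Z\<close> a Markov chain on the count vectors \<open>'k \<Rightarrow> nat\<close>.  On the
  countable set \<open>S\<close> of count vectors outside \<open>M\<^sub>0\<close> its substochastic transition matrix
  is strictly positive (every Poisson weight is positive because \<open>F > 0\<close> off \<open>M\<^sub>0\<close>), it
  is dominated uniformly in the starting point by a fixed summable function (because \<open>F\<close> is
  bounded, every row is dominated by a multiple of a product Poisson law), and from every
  state the chain leaves \<open>S\<close> with positive probability (it can jump to the origin).

  The proof establishes, in this order:
  \<^item> Perron's theorem for finite strictly positive matrices (positive left eigenvector),
    proved by maximising the Collatz--Wielandt quotient over a compact set;
  \<^item> an abstract existence theorem for quasi-stationary distributions of a countable-state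
    kernel with the three properties above: Perron eigenvectors of finite truncations are
    tight, a pointwise convergent subsequence exists by compactness of \<open>[0,1]\<^sup>S\<close>, and
    dominated convergence passes the eigen-equation to the limit;
  \<^item> the transfer of a quasi-stationary distribution along an injection, and the Poisson
    estimates verifying the three properties for the count chain.
\<close>

definition simplex_on :: "'a set \<Rightarrow> ('a \<Rightarrow> real) set" where
  "simplex_on A = {v. (\<forall>x. 0 \<le> v x) \<and> (\<forall>x. x \<notin> A \<longrightarrow> v x = 0) \<and> sum v A = 1}"

definition row_mult :: "'a set \<Rightarrow> ('a \<Rightarrow> 'a \<Rightarrow> real) \<Rightarrow> ('a \<Rightarrow> real) \<Rightarrow> 'a \<Rightarrow> real" where
  "row_mult A q v y = (\<Sum>x\<in>A. v x * q x y)"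

lemma compact_PiE_UNIV:
  fixes X :: "'a \<Rightarrow> real set"
  assumes "\<And>i. compact (X i)"
  shows "compact (PiE UNIV X)"
proof -
  have "compactin (product_topology (\<lambda>_. euclidean) UNIV) (PiE UNIV X)"
    using assms by (simp add: compactin_PiE)
  then show ?thesis by (simp add: euclidean_product_topology)
qed

lemma continuous_on_coordinate: "continuous_on S (\<lambda>f::'a \<Rightarrow> real. f x)"
  by (rule continuous_on_subset[OF continuous_on_product_coordinates]) simp

lemma simplex_on_le_1:
  assumes "finite A" "v \<in> simplex_on A"
  shows "v x \<le> 1"
proof (cases "x \<in> A")
  case True
  then have "v x \<le> sum v A"
    using assms by (intro member_le_sum) (auto simp: simplex_on_def)
  then show ?thesis using assms(2) by (simp add: simplex_on_def)
qed (use assms in \<open>auto simp: simplex_on_def\<close>)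

lemma compact_simplex_on:
  assumes "finite A"
  shows "compact (simplex_on A)"
proof -
  define X where "X y = (if y \<in> A then {0..1::real} else {0})" for y
  have "simplex_on A = PiE UNIV X \<inter> {v. sum v A = 1}"
  proof (intro set_eqI iffI)
    fix v assume "v \<in> simplex_on A"
    then show "v \<in> PiE UNIV X \<inter> {v. sum v A = 1}"
      using simplex_on_le_1[OF assms] by (auto simp: simplex_on_def X_def)
  next
    fix v assume "v \<in> PiE UNIV X \<inter> {v. sum v A = 1}"
    then show "v \<in> simplex_on A"
      by (auto simp: simplex_on_def X_def PiE_iff split: if_splits)
  qed
  moreover have "closed {v::'a \<Rightarrow> real. sum v A = 1}"
    by (intro closed_Collect_eq continuous_intros continuous_on_coordinate)
  moreover have "compact (PiE UNIV X)"
    by (rule compact_PiE_UNIV) (simp add: X_def)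
  ultimately show ?thesis by (simp add: compact_Int_closed)
qed

lemma continuous_on_coordinate_fst: "continuous_on S (\<lambda>p::('a \<Rightarrow> real) \<times> 'b::topological_space. fst p x)"
  by (rule continuous_on_compose2[OF continuous_on_product_coordinates continuous_on_fst]) auto

locale positive_matrix =
  fixes A :: "'a set" and q :: "'a \<Rightarrow> 'a \<Rightarrow> real"
  assumes finite_A: "finite A" and nonempty_A: "A \<noteq> {}"
    and positive: "\<And>x y. x \<in> A \<Longrightarrow> y \<in> A \<Longrightarrow> 0 < q x y"
begin

abbreviation T :: "('a \<Rightarrow> real) \<Rightarrow> 'a \<Rightarrow> real" where
  "T \<equiv> row_mult A q"

lemma T_scale: "T (\<lambda>x. c * v x) y = c * T v y"
  by (simp add: row_mult_def sum_distrib_left mult_ac)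

lemma T_diff: "T (\<lambda>x. v x - c * u x) y = T v y - c * T u y"
  by (simp add: row_mult_def sum_subtractf sum_distrib_left algebra_simps)

lemma T_cong: "(\<And>x. x \<in> A \<Longrightarrow> v x = w x) \<Longrightarrow> T v y = T w y"
  by (simp add: row_mult_def)

lemma T_pos:
  assumes "\<And>x. x \<in> A \<Longrightarrow> 0 \<le> v x" "x0 \<in> A" "0 < v x0" "y \<in> A"
  shows "0 < T v y"
  unfolding row_mult_def using assms positive finite_A
  by (intro sum_pos2[of A x0] mult_nonneg_nonneg mult_pos_pos) (auto intro: less_imp_le)

lemma simplex_on_pos:
  assumes "v \<in> simplex_on A"
  obtains x0 where "x0 \<in> A" "0 < v x0"
proof -
  have "\<exists>x\<in>A. v x \<noteq> 0"
    using assms by (metis (mono_tags, lifting) mem_Collect_eq simplex_on_def sum.neutral zero_neq_one)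
  then show ?thesis using that assms by (force simp: simplex_on_def less_eq_real_def)
qed

text \<open>Any \<open>s\<close> with \<open>s v \<le> v Q\<close> for a probability vector \<open>v\<close> is bounded by the sum of
  all entries of \<open>Q\<close>; this makes the set of feasible pairs \<open>(v, s)\<close> compact.\<close>

definition total :: real where "total = (\<Sum>x\<in>A. \<Sum>y\<in>A. q x y)"

lemma collatz_wielandt_bound:
  assumes "v \<in> simplex_on A" "\<And>y. y \<in> A \<Longrightarrow> s * v y \<le> T v y"
  shows "s \<le> total"
proof -
  have nn: "0 \<le> v x" for x using assms(1) by (simp add: simplex_on_def)
  have "s = (\<Sum>y\<in>A. s * v y)"
    using assms(1) by (simp add: simplex_on_def flip: sum_distrib_left)
  also have "\<dots> \<le> (\<Sum>y\<in>A. T v y)"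
    using assms(2) by (rule sum_mono)
  also have "\<dots> = (\<Sum>x\<in>A. \<Sum>y\<in>A. v x * q x y)"
    unfolding row_mult_def by (rule sum.swap)
  also have "\<dots> = (\<Sum>x\<in>A. v x * (\<Sum>y\<in>A. q x y))"
    by (simp add: sum_distrib_left)
  also have "\<dots> \<le> (\<Sum>x\<in>A. v x * total)"
  proof (intro sum_mono mult_left_mono)
    fix x assume "x \<in> A"
    then show "(\<Sum>y\<in>A. q x y) \<le> total"
      unfolding total_def using finite_A positive
      by (intro member_le_sum[of x A "\<lambda>x. \<Sum>y\<in>A. q x y"] sum_nonneg) (auto intro: less_imp_le)
  qed (rule nn)
  also have "\<dots> = total"
    using assms(1) by (simp add: simplex_on_def flip: sum_distrib_right)
  finally show ?thesis .
qed

lemma collatz_wielandt_improve: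
  assumes v: "v \<in> simplex_on A" and le: "\<And>y. y \<in> A \<Longrightarrow> s * v y \<le> T v y"
    and strict: "y0 \<in> A" "s * v y0 < T v y0"
  obtains v' \<delta> where "v' \<in> simplex_on A" "0 < \<delta>" "\<And>y. y \<in> A \<Longrightarrow> (s + \<delta>) * v' y \<le> T v' y"
proof -
  obtain x0 where x0: "x0 \<in> A" "0 < v x0" using simplex_on_pos[OF v] .
  define u where "u = T v"
  have u_pos: "0 < u y" if "y \<in> A" for y
    unfolding u_def using v x0 that by (intro T_pos) (auto simp: simplex_on_def)
  define d where "d y = u y - s * v y" for y
  have Td_pos: "0 < T d y" if "y \<in> A" for y
    using le strict that by (intro T_pos[of d y0]) (auto simp: d_def u_def)
  define \<delta> where "\<delta> = Min ((\<lambda>y. T d y / u y) ` A)"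
  have \<delta>_pos: "0 < \<delta>"
    unfolding \<delta>_def using finite_A nonempty_A Td_pos u_pos by (simp add: Min_gr_iff)
  have u_improved: "(s + \<delta>) * u y \<le> T u y" if "y \<in> A" for y
  proof -
    have "\<delta> \<le> T d y / u y" unfolding \<delta>_def using finite_A that by simp
    then have "\<delta> * u y \<le> T d y" using u_pos[OF that] by (simp add: field_simps)
    moreover have "T d y = T u y - s * u y" unfolding d_def u_def by (rule T_diff)
    ultimately show ?thesis by (simp add: algebra_simps)
  qed
  define U where "U = sum u A"
  have U_pos: "0 < U"
    unfolding U_def using finite_A x0 u_pos by (intro sum_pos2[of A x0]) (auto intro: less_imp_le)
  define v' where "v' y = (if y \<in> A then u y / U else 0)" for y
  have Tv': "T v' y = T u y / U" for y
  proof -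
    have "T v' y = T (\<lambda>x. inverse U * u x) y" by (rule T_cong) (simp add: v'_def field_simps)
    also have "\<dots> = T u y / U" by (simp only: T_scale) (simp add: field_simps)
    finally show ?thesis .
  qed
  have "v' \<in> simplex_on A"
    using U_pos u_pos by (auto simp: simplex_on_def v'_def U_def less_imp_le simp flip: sum_divide_distrib)
  moreover have "(s + \<delta>) * v' y \<le> T v' y" if "y \<in> A" for y
  proof -
    have "(s + \<delta>) * v' y = (s + \<delta>) * u y / U" using that by (simp add: v'_def)
    also have "\<dots> \<le> T u y / U" using U_pos by (intro divide_right_mono u_improved[OF that]) simp
    finally show ?thesis by (simp only: Tv')
  qed
  ultimately show ?thesis using that \<delta>_pos by blast
qed

definition feasible :: "(('a \<Rightarrow> real) \<times> real) set" where
  "feasible = (simplex_on A \<times> {0..total}) \<inter> (\<Inter>y\<in>A. {p. snd p * fst p y \<le> T (fst p) y})"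

lemma compact_feasible: "compact feasible"
proof -
  have "closed {p::('a \<Rightarrow> real) \<times> real. snd p * fst p y \<le> T (fst p) y}" for y
    unfolding row_mult_def
    by (intro closed_Collect_le continuous_intros continuous_on_coordinate_fst)
  then show ?thesis
    unfolding feasible_def
    by (intro compact_Int_closed compact_Times compact_simplex_on finite_A compact_Icc
        closed_INT ballI)
qed

lemma feasible_nonempty: "feasible \<noteq> {}"
proof -
  define uniform where "uniform y = (if y \<in> A then 1 / real (card A) else 0)" for y
  have "uniform \<in> simplex_on A"
    using finite_A nonempty_A by (auto simp: simplex_on_def uniform_def)
  moreover have "0 \<le> total"
    unfolding total_def using positive by (intro sum_nonneg) (auto intro: less_imp_le)
  moreover have "0 \<le> T uniform y" if "y \<in> A" for y
    unfolding row_mult_def uniform_def using positive that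
    by (intro sum_nonneg mult_nonneg_nonneg) (auto intro: less_imp_le)
  ultimately have "(uniform, 0) \<in> feasible" by (auto simp: feasible_def)
  then show ?thesis by blast
qed

text \<open>The eigenvector maximises the
  Collatz--Wielandt quotient \<open>s\<close> over the feasible pairs \<open>(v, s)\<close>; by the improvement step
  the maximiser satisfies \<open>v Q = s v\<close>.\<close>

theorem perron_left_eigenvector:
  obtains v s where "v \<in> simplex_on A" "0 < s" "\<And>y. y \<in> A \<Longrightarrow> 0 < v y"
    "\<And>y. y \<in> A \<Longrightarrow> T v y = s * v y"
proof -
  have "compact (snd ` feasible)"
    by (intro compact_continuous_image continuous_intros compact_feasible)
  then obtain t where "t \<in> snd ` feasible" "\<forall>t'\<in>snd ` feasible. t' \<le> t"
    using compact_attains_sup[of "snd ` feasible"] feasible_nonempty by blast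
  then obtain p where pE: "p \<in> feasible" and p_max: "\<And>p'. p' \<in> feasible \<Longrightarrow> snd p' \<le> snd p"
    by auto
  obtain v s where p: "p = (v, s)" by (cases p)
  have v: "v \<in> simplex_on A" and s_nn: "0 \<le> s" and le: "\<And>y. y \<in> A \<Longrightarrow> s * v y \<le> T v y"
    using pE by (auto simp: feasible_def p)
  have eig: "T v y = s * v y" if y: "y \<in> A" for y
  proof (rule ccontr)
    assume "T v y \<noteq> s * v y"
    with le[OF y] have "s * v y < T v y" by simp
    then obtain v' \<delta> where "v' \<in> simplex_on A" "0 < \<delta>" "\<And>y. y \<in> A \<Longrightarrow> (s + \<delta>) * v' y \<le> T v' y"
      using collatz_wielandt_improve[OF v le y] by blast
    moreover from this have "s + \<delta> \<le> total" by (intro collatz_wielandt_bound)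
    ultimately have "(v', s + \<delta>) \<in> feasible" using s_nn by (auto simp: feasible_def)
    from p_max[OF this] \<open>0 < \<delta>\<close> show False by (simp add: p)
  qed
  obtain x0 where x0: "x0 \<in> A" "0 < v x0" using simplex_on_pos[OF v] .
  have Tv_pos: "0 < T v y" if "y \<in> A" for y
    using v x0 that by (intro T_pos) (auto simp: simplex_on_def)
  have "0 < s" using Tv_pos[OF x0(1)] eig[OF x0(1)] s_nn x0 by (simp add: zero_less_mult_iff)
  moreover have "0 < v y" if "y \<in> A" for y
    using Tv_pos[OF that] eig[OF that] \<open>0 < s\<close> by (simp add: zero_less_mult_iff)
  ultimately show ?thesis using that v eig by blast
qed

end

definition is_qsd :: "('a \<Rightarrow> 'a pmf) \<Rightarrow> 'a set \<Rightarrow> 'a pmf \<Rightarrow> real \<Rightarrow> bool" where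
  "is_qsd K S \<mu> lam \<longleftrightarrow> set_pmf \<mu> \<subseteq> S \<and> 0 < lam \<and> lam < 1 \<and>
     (\<forall>\<Gamma>. \<Gamma> \<subseteq> S \<longrightarrow> (\<integral>x. measure_pmf.prob (K x) \<Gamma> \<partial>measure_pmf \<mu>) = lam * measure_pmf.prob \<mu> \<Gamma>)"

text \<open>The quasi-stationarity equation for sets \<open>\<Gamma>\<close> follows from the pointwise equation
  \<open>(\<mu> K)(w) = lam \<mu>(w)\<close> on \<open>\<Gamma>\<close>, since the left-hand side is the probability of \<open>\<Gamma>\<close> under
  the one-step law \<open>bind_pmf \<mu> K\<close>.\<close>

lemma qsd_equation_from_pointwise:
  assumes lam: "0 \<le> lam" and eig: "\<And>w. w \<in> \<Gamma> \<Longrightarrow> pmf (bind_pmf \<mu> K) w = lam * pmf \<mu> w"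
  shows "(\<integral>x. measure_pmf.prob (K x) \<Gamma> \<partial>measure_pmf \<mu>) = lam * measure_pmf.prob \<mu> \<Gamma>"
proof -
  have "ennreal (\<integral>x. measure_pmf.prob (K x) \<Gamma> \<partial>measure_pmf \<mu>)
      = (\<integral>\<^sup>+x. ennreal (measure_pmf.prob (K x) \<Gamma>) \<partial>measure_pmf \<mu>)"
    by (intro nn_integral_eq_integral[symmetric] measure_pmf.integrable_const_bound[where B=1]) auto
  also have "\<dots> = emeasure (bind_pmf \<mu> K) \<Gamma>"
    unfolding emeasure_bind_pmf by (simp add: measure_pmf.emeasure_eq_measure)
  also have "\<dots> = (\<integral>\<^sup>+w. ennreal lam * pmf \<mu> w \<partial>count_space \<Gamma>)"
    using eig lam by (auto simp flip: nn_integral_pmf ennreal_mult intro!: nn_integral_cong)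
  also have "\<dots> = ennreal (lam * measure_pmf.prob \<mu> \<Gamma>)"
    using lam by (simp add: nn_integral_cmult nn_integral_pmf measure_pmf.emeasure_eq_measure ennreal_mult)
  finally show ?thesis using lam by simp
qed

lemma pmf_bind_count_space:
  "pmf (bind_pmf \<mu> K) w = (\<integral>z. pmf \<mu> z * pmf (K z) w \<partial>count_space UNIV)"
  by (simp add: pmf_bind measure_pmf_eq_density integral_density)

lemma integral_count_space_finite_support:
  fixes f :: "'a \<Rightarrow> real"
  assumes "finite B" "\<And>z. z \<notin> B \<Longrightarrow> f z = 0"
  shows "integral\<^sup>L (count_space UNIV) f = sum f B"
proof -
  have sub: "{a \<in> UNIV. f a \<noteq> 0} \<subseteq> B" using assms by auto
  then have "integral\<^sup>L (count_space UNIV) f = (\<Sum>a | a \<in> UNIV \<and> f a \<noteq> 0. f a)"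
    using assms by (intro lebesgue_integral_count_space_finite_support) (auto intro: finite_subset)
  also have "\<dots> = sum f B"
    using sub assms by (intro sum.mono_neutral_left) auto
  finally show ?thesis .
qed

lemma unit_box_convergent_subseq:
  fixes f :: "nat \<Rightarrow> 'a::countable \<Rightarrow> real" and t :: "nat \<Rightarrow> real"
  assumes "\<And>n x. f n x \<in> {0..1}" "\<And>n. t n \<in> {0..1}"
  obtains r l lt where "strict_mono r" "\<And>x. (\<lambda>j. f (r j) x) \<longlonglongrightarrow> l x" "(\<lambda>j. t (r j)) \<longlonglongrightarrow> lt"
proof -
  define box where "box = PiE (UNIV::'a set) (\<lambda>_. {0..1::real}) \<times> {0..1::real}"
  have "seq_compact box"
    unfolding box_def by (intro compact_imp_seq_compact compact_Times compact_PiE_UNIV) auto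
  moreover have "\<forall>n. (f n, t n) \<in> box"
    using assms by (simp add: box_def PiE_def extensional_def)
  ultimately obtain p r where "p \<in> box" "strict_mono r" and lim: "((\<lambda>n. (f n, t n)) \<circ> r) \<longlonglongrightarrow> p"
    by (rule seq_compactE)
  have "isCont (\<lambda>h::'a \<Rightarrow> real. h x) (fst p)" for x
    by (rule continuous_on_interior[OF continuous_on_product_coordinates]) simp
  from isCont_tendsto_compose[OF this tendsto_fst[OF lim]]
  have "(\<lambda>j. f (r j) x) \<longlonglongrightarrow> fst p x" for x
    by (simp add: o_def)
  moreover have "(\<lambda>j. t (r j)) \<longlonglongrightarrow> snd p"
    using tendsto_snd[OF lim] by (simp add: o_def)
  ultimately show ?thesis by (rule that[OF \<open>strict_mono r\<close>])
qed

lemma pmf_of_density: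
  fixes f :: "'a \<Rightarrow> real"
  assumes "\<And>x. 0 \<le> f x" "integrable (count_space UNIV) f" "integral\<^sup>L (count_space UNIV) f = 1"
  shows "\<exists>p. \<forall>x. pmf p x = f x"
proof -
  have "(\<integral>\<^sup>+x. ennreal (f x) \<partial>count_space UNIV) = 1"
    using assms by (simp add: nn_integral_eq_integral)
  then show ?thesis using assms(1) pmf_embed_pmf[of f] by blast
qed

lemma qsd_eigenvalue_less_one:
  assumes "set_pmf \<mu> \<subseteq> S" and escape: "\<And>z. z \<in> S \<Longrightarrow> measure_pmf.prob (K z) S < 1"
    and eq: "(\<integral>x. measure_pmf.prob (K x) S \<partial>measure_pmf \<mu>) = lam * measure_pmf.prob \<mu> S"
  shows "lam < 1"
proof -
  have "measure_pmf.prob \<mu> S = 1"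
    using assms(1) by (simp add: measure_pmf.prob_eq_1 AE_measure_pmf_iff subset_eq)
  moreover have "(\<integral>x. measure_pmf.prob (K x) S \<partial>measure_pmf \<mu>) < (\<integral>x. 1 \<partial>measure_pmf \<mu>)"
  proof (rule measure_pmf.integral_less_AE_space)
    show "integrable (measure_pmf \<mu>) (\<lambda>x. measure_pmf.prob (K x) S)"
      by (rule measure_pmf.integrable_const_bound[where B=1]) auto
    show "AE x in measure_pmf \<mu>. measure_pmf.prob (K x) S < 1"
      using assms(1) escape by (intro AE_pmfI) auto
  qed (auto simp: measure_pmf.emeasure_space_1)
  ultimately show ?thesis using eq by simp
qed

lemma limit_density_mass:
  fixes A :: "nat \<Rightarrow> 'a set"
  assumes finite: "\<And>n. finite (A n)" and m: "\<And>n. m n \<in> simplex_on (A n)"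
    and dom: "\<And>n w. m n w \<le> D w" "integrable (count_space UNIV) D"
    and lim: "\<And>w. (\<lambda>j. m (r j) w) \<longlonglongrightarrow> mi w"
  shows "\<And>w. 0 \<le> mi w" "integrable (count_space UNIV) mi" "integral\<^sup>L (count_space UNIV) mi = 1"
proof -
  have m_nn: "0 \<le> m n w" for n w using m by (simp add: simplex_on_def)
  show mi_nn: "0 \<le> mi w" for w
    using m_nn by (intro tendsto_lowerbound[OF lim]) (auto intro: always_eventually)
  have mi_dom: "mi w \<le> D w" for w
    using dom by (intro tendsto_upperbound[OF lim]) (auto intro: always_eventually)
  have "AE z in count_space UNIV. norm (mi z) \<le> norm (D z)"
    using mi_nn mi_dom by (intro AE_I2) (metis abs_ge_self abs_of_nonneg order_trans real_norm_def)
  then show "integrable (count_space UNIV) mi"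
    by (intro Bochner_Integration.integrable_bound[OF dom(2)]) simp_all
  have "(\<lambda>j. integral\<^sup>L (count_space UNIV) (m (r j))) \<longlonglongrightarrow> integral\<^sup>L (count_space UNIV) mi"
  proof (rule integral_dominated_convergence[where w=D])
    show "AE z in count_space UNIV. norm (m (r j) z) \<le> D z" for j
      using dom(1) m_nn by (intro AE_I2) simp
    show "AE z in count_space UNIV. (\<lambda>j. m (r j) z) \<longlonglongrightarrow> mi z"
      by (intro AE_I2 lim)
  qed (simp_all add: dom(2))
  moreover have "integral\<^sup>L (count_space UNIV) (m n) = 1" for n
    using m[of n] finite by (subst integral_count_space_finite_support[of "A n"]) (auto simp: simplex_on_def)
  ultimately show "integral\<^sup>L (count_space UNIV) mi = 1"
    by (simp add: LIMSEQ_const_iff)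
qed

locale countable_kernel =
  fixes K :: "'a::countable \<Rightarrow> 'a pmf" and S :: "'a set" and g :: "'a \<Rightarrow> real"
  assumes S_nonempty: "S \<noteq> {}"
    and irreducible: "\<And>z w. z \<in> S \<Longrightarrow> w \<in> S \<Longrightarrow> 0 < pmf (K z) w"
    and tight: "\<And>z w. z \<in> S \<Longrightarrow> pmf (K z) w \<le> g w"
    and integrable_g: "integrable (count_space UNIV) g"
    and escape: "\<And>z. z \<in> S \<Longrightarrow> measure_pmf.prob (K z) S < 1"
begin

abbreviation q :: "'a \<Rightarrow> 'a \<Rightarrow> real" where
  "q \<equiv> \<lambda>z w. pmf (K z) w"

lemma exhaustion:
  "\<exists>(A :: nat \<Rightarrow> 'a set) z1. (\<forall>n. finite (A n) \<and> A n \<subseteq> S \<and> z1 \<in> A n) \<and>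
     (\<forall>w\<in>S. \<exists>N. \<forall>n\<ge>N. w \<in> A n)"
proof -
  obtain z1 where "z1 \<in> S" using S_nonempty by blast
  define A where "A n = insert z1 {w \<in> S. to_nat w \<le> n}" for n
  have "finite (A n)" for n
  proof -
    have "{w \<in> S. to_nat w \<le> n} \<subseteq> to_nat -` {..n}" by auto
    moreover have "finite (to_nat -` {..n} :: 'a set)"
      by (intro finite_vimageI) (auto simp: inj_on_def)
    ultimately show ?thesis by (auto simp: A_def intro: finite_subset)
  qed
  then show ?thesis
    using \<open>z1 \<in> S\<close> by (intro exI[of _ A] exI[of _ z1]) (auto simp: A_def)
qed

lemma truncated_eigenpairs:
  fixes A :: "nat \<Rightarrow> 'a set"
  assumes "\<And>n. finite (A n)" "\<And>n. A n \<subseteq> S" "\<And>n. A n \<noteq> {}"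
  shows "\<exists>m lam. \<forall>n. m n \<in> simplex_on (A n) \<and> (\<forall>y\<in>A n. 0 < m n y) \<and>
           (\<forall>y\<in>A n. row_mult (A n) q (m n) y = lam n * m n y)"
proof -
  have "\<exists>v s. v \<in> simplex_on (A n) \<and> (\<forall>y\<in>A n. 0 < v y) \<and>
          (\<forall>y\<in>A n. row_mult (A n) q v y = s * v y)" for n
  proof -
    interpret positive_matrix "A n" q
      by unfold_locales (use assms in \<open>blast intro: irreducible\<close>)+
    obtain v s where "v \<in> simplex_on (A n)" "0 < s" "\<And>y. y \<in> A n \<Longrightarrow> 0 < v y"
        "\<And>y. y \<in> A n \<Longrightarrow> row_mult (A n) q v y = s * v y"
      using perron_left_eigenvector by blast
    then show ?thesis by blast
  qed
  then show ?thesis by metis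
qed

text \<open>A Perron eigenpair of a truncation containing \<open>z1\<close> has eigenvalue between the return
  weight \<open>q z1 z1\<close> and one, and the eigenvector is dominated by \<open>g / q z1 z1\<close>: the uniform
  domination of the rows is what makes the family of eigenvectors tight.\<close>

lemma truncated_eigenpair_bounds:
  assumes B: "finite B" "B \<subseteq> S" "z1 \<in> B" and m: "m \<in> simplex_on B" "\<And>y. y \<in> B \<Longrightarrow> 0 < m y"
    and eig: "\<And>y. y \<in> B \<Longrightarrow> row_mult B q m y = lam * m y"
  shows "q z1 z1 \<le> lam" "lam \<le> 1" "\<And>w. q z1 z1 * m w \<le> g w"
proof -
  have m_nn: "0 \<le> m x" for x using m(1) by (simp add: simplex_on_def)
  have m_sum: "sum m B = 1" using m(1) by (simp add: simplex_on_def)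
  have "m z1 * q z1 z1 \<le> row_mult B q m z1"
    unfolding row_mult_def using B m_nn by (intro member_le_sum[of z1 B "\<lambda>x. m x * q x z1"]) auto
  then show "q z1 z1 \<le> lam"
    using eig[OF B(3)] m(2)[OF B(3)] by (simp add: mult.commute)
  have "lam = (\<Sum>y\<in>B. lam * m y)" using m_sum by (simp flip: sum_distrib_left)
  also have "\<dots> = (\<Sum>y\<in>B. \<Sum>x\<in>B. m x * q x y)" using eig by (simp add: row_mult_def)
  also have "\<dots> = (\<Sum>x\<in>B. m x * (\<Sum>y\<in>B. q x y))"
    by (subst sum.swap) (simp add: sum_distrib_left)
  also have "\<dots> \<le> (\<Sum>x\<in>B. m x * 1)"
    using B m_nn by (intro sum_mono mult_left_mono) (simp_all flip: measure_measure_pmf_finite)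
  finally show "lam \<le> 1" using m_sum by simp
  show "q z1 z1 * m w \<le> g w" for w
  proof (cases "w \<in> B")
    case True
    have "q z1 z1 * m w \<le> lam * m w"
      using \<open>q z1 z1 \<le> lam\<close> m_nn by (rule mult_right_mono)
    also have "\<dots> = (\<Sum>x\<in>B. m x * q x w)" using eig[OF True] by (simp add: row_mult_def)
    also have "\<dots> \<le> (\<Sum>x\<in>B. m x * g w)"
      using B m_nn tight by (intro sum_mono mult_left_mono) auto
    also have "\<dots> = g w" using m_sum by (simp flip: sum_distrib_right)
    finally show ?thesis .
  next
    case False
    have "0 \<le> g w" using B by (intro order_trans[OF pmf_nonneg tight]) auto
    then show ?thesis using False m(1) by (simp add: simplex_on_def)
  qed
qed

lemma limit_eigen_equation:
  fixes A :: "nat \<Rightarrow> 'a set"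
  assumes A: "\<And>n. finite (A n)" "\<exists>N. \<forall>n\<ge>N. w \<in> A n"
    and m: "\<And>n. m n \<in> simplex_on (A n)"
    and eig: "\<And>n y. y \<in> A n \<Longrightarrow> row_mult (A n) q (m n) y = lam n * m n y"
    and dom: "\<And>n w. m n w \<le> D w" "integrable (count_space UNIV) D"
    and r: "strict_mono r" and lim: "\<And>w. (\<lambda>j. m (r j) w) \<longlonglongrightarrow> mi w" "(\<lambda>j. lam (r j)) \<longlonglongrightarrow> li"
  shows "integral\<^sup>L (count_space UNIV) (\<lambda>z. mi z * q z w) = li * mi w"
proof -
  have m_nn: "0 \<le> m n w" for n w using m by (simp add: simplex_on_def)
  have lim_integral: "(\<lambda>j. integral\<^sup>L (count_space UNIV) (\<lambda>z. m (r j) z * q z w))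
          \<longlonglongrightarrow> integral\<^sup>L (count_space UNIV) (\<lambda>z. mi z * q z w)"
  proof (rule integral_dominated_convergence[where w=D])
    show "AE z in count_space UNIV. norm (m (r j) z * q z w) \<le> D z" for j
    proof (rule AE_I2)
      fix z
      have "norm (m (r j) z * q z w) = m (r j) z * q z w" using m_nn by simp
      also have "\<dots> \<le> m (r j) z * 1" using m_nn by (intro mult_left_mono pmf_le_1)
      also have "\<dots> \<le> D z" using dom(1) by simp
      finally show "norm (m (r j) z * q z w) \<le> D z" .
    qed
    show "AE z in count_space UNIV. (\<lambda>j. m (r j) z * q z w) \<longlonglongrightarrow> mi z * q z w"
      by (intro AE_I2 tendsto_mult_right lim(1))
  qed (simp_all add: dom(2))
  obtain N where N: "\<And>n. n \<ge> N \<Longrightarrow> w \<in> A n" using A(2) by blast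
  have "eventually (\<lambda>j. lam (r j) * m (r j) w
          = integral\<^sup>L (count_space UNIV) (\<lambda>z. m (r j) z * q z w)) sequentially"
  proof (rule eventually_sequentiallyI[of N])
    fix j assume "N \<le> j"
    then have "w \<in> A (r j)" using seq_suble[OF r, of j] by (intro N) linarith
    moreover have "m (r j) z = 0" if "z \<notin> A (r j)" for z
      using m that by (simp add: simplex_on_def)
    ultimately show "lam (r j) * m (r j) w = integral\<^sup>L (count_space UNIV) (\<lambda>z. m (r j) z * q z w)"
      using A(1) eig by (subst integral_count_space_finite_support[of "A (r j)"]) (auto simp: row_mult_def)
  qed
  then have "(\<lambda>j. integral\<^sup>L (count_space UNIV) (\<lambda>z. m (r j) z * q z w)) \<longlonglongrightarrow> li * mi w"
    by (rule Lim_transform_eventually[OF tendsto_mult[OF lim(2) lim(1)]])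
  then show ?thesis
    using LIMSEQ_unique[OF lim_integral] by simp
qed

lemma eigendensity_exists:
  "\<exists>mi li. 0 < li \<and> (\<forall>w. 0 \<le> mi w) \<and> (\<forall>w. w \<notin> S \<longrightarrow> mi w = 0) \<and>
     integrable (count_space UNIV) mi \<and> integral\<^sup>L (count_space UNIV) mi = 1 \<and>
     (\<forall>w\<in>S. integral\<^sup>L (count_space UNIV) (\<lambda>z. mi z * q z w) = li * mi w)"
proof -
  obtain A :: "nat \<Rightarrow> 'a set" and z1 where A: "\<And>n. finite (A n)" "\<And>n. A n \<subseteq> S" "\<And>n. z1 \<in> A n"
      "\<And>w. w \<in> S \<Longrightarrow> \<exists>N. \<forall>n\<ge>N. w \<in> A n"
    using exhaustion by blast
  have A_nonempty: "A n \<noteq> {}" for n using A(3) by blast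
  obtain m lam where m: "\<And>n. m n \<in> simplex_on (A n)" "\<And>n y. y \<in> A n \<Longrightarrow> 0 < m n y"
      and eig: "\<And>n y. y \<in> A n \<Longrightarrow> row_mult (A n) q (m n) y = lam n * m n y"
    using truncated_eigenpairs[of A, OF A(1,2) A_nonempty] by blast
  define c where "c = q z1 z1"
  have c_pos: "0 < c" unfolding c_def using A(2,3) irreducible by blast
  have lam_bounds: "c \<le> lam n" "lam n \<le> 1" and m_dom: "\<And>w. m n w \<le> g w / c" for n
    using truncated_eigenpair_bounds[OF A(1-3) m eig] c_pos by (simp_all add: c_def field_simps)
  have m_unit: "m n w \<in> {0..1}" and lam_unit: "lam n \<in> {0..1}" for n w
    using simplex_on_le_1[OF A(1) m(1)] m(1) lam_bounds[of n] c_pos by (auto simp: simplex_on_def)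
  obtain r mi li where r: "strict_mono r" and lim: "\<And>w. (\<lambda>j. m (r j) w) \<longlonglongrightarrow> mi w"
      "(\<lambda>j. lam (r j)) \<longlonglongrightarrow> li"
    using unit_box_convergent_subseq[of m lam, OF m_unit lam_unit] by blast
  have "0 < li"
    using lam_bounds by (intro less_le_trans[OF c_pos] tendsto_lowerbound[OF lim(2)])
      (auto intro: always_eventually)
  moreover have "mi w = 0" if "w \<notin> S" for w
  proof -
    have "w \<notin> A n" for n using A(2) that by blast
    then have "(\<lambda>j. m (r j) w) = (\<lambda>j. 0)" using m(1) by (simp add: simplex_on_def)
    then show ?thesis using lim(1)[of w] by (simp add: LIMSEQ_const_iff)
  qed
  moreover have integrable_D: "integrable (count_space UNIV) (\<lambda>w. g w / c)"
    using integrable_g by (rule integrable_divide)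
  note mass = limit_density_mass[where A=A and m=m and D="\<lambda>w. g w / c" and r=r and mi=mi,
      OF A(1) m(1) m_dom integrable_D lim(1)]
  moreover have "integral\<^sup>L (count_space UNIV) (\<lambda>z. mi z * q z w) = li * mi w" if "w \<in> S" for w
    by (rule limit_eigen_equation[where A=A and m=m and D="\<lambda>w. g w / c" and r=r,
          OF A(1) A(4)[OF that] m(1) eig m_dom integrable_D r lim])
  ultimately show ?thesis by blast
qed

theorem qsd_exists: "\<exists>\<mu> lam. is_qsd K S \<mu> lam"
proof -
  obtain mi li where li_pos: "0 < li" and mi_nn: "\<And>w. 0 \<le> mi w"
    and mi_outside: "\<And>w. w \<notin> S \<Longrightarrow> mi w = 0"
    and mass: "integrable (count_space UNIV) mi" "integral\<^sup>L (count_space UNIV) mi = 1"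
    and eigen: "\<And>w. w \<in> S \<Longrightarrow> integral\<^sup>L (count_space UNIV) (\<lambda>z. mi z * q z w) = li * mi w"
    using eigendensity_exists by blast
  obtain \<nu> where pmf_\<nu>: "\<And>w. pmf \<nu> w = mi w"
    using pmf_of_density[OF mi_nn mass] by blast
  have set_\<nu>: "set_pmf \<nu> \<subseteq> S"
  proof
    fix w assume "w \<in> set_pmf \<nu>"
    then have "mi w \<noteq> 0" by (simp add: set_pmf_iff pmf_\<nu>)
    then show "w \<in> S" using mi_outside by blast
  qed
  have qsd_eq: "(\<integral>x. measure_pmf.prob (K x) \<Gamma> \<partial>measure_pmf \<nu>) = li * measure_pmf.prob \<nu> \<Gamma>"
    if "\<Gamma> \<subseteq> S" for \<Gamma>
  proof (rule qsd_equation_from_pointwise)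
    show "0 \<le> li" using li_pos by simp
    fix w assume "w \<in> \<Gamma>"
    then show "pmf (bind_pmf \<nu> K) w = li * pmf \<nu> w"
      using that eigen[of w] by (auto simp: pmf_bind_count_space pmf_\<nu>)
  qed
  have "li < 1"
    by (rule qsd_eigenvalue_less_one[OF set_\<nu> escape qsd_eq[OF order_refl]])
  with set_\<nu> qsd_eq li_pos have "is_qsd K S \<nu> li"
    unfolding is_qsd_def by simp
  then show ?thesis by blast
qed

end

lemma qsd_transfer:
  fixes f :: "'a \<Rightarrow> 'b"
  assumes qsd: "is_qsd K S \<nu> lam" and P: "\<And>z. P (f z) = map_pmf f (K z)"
    and image: "f ` S \<subseteq> T" and preimage: "\<And>\<Gamma>. \<Gamma> \<subseteq> T \<Longrightarrow> f -` \<Gamma> \<subseteq> S"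
  shows "is_qsd P T (map_pmf f \<nu>) lam"
  unfolding is_qsd_def
proof (intro conjI allI impI)
  show "set_pmf (map_pmf f \<nu>) \<subseteq> T" using qsd image by (auto simp: is_qsd_def)
  show "0 < lam" "lam < 1" using qsd by (simp_all add: is_qsd_def)
  fix \<Gamma> assume "\<Gamma> \<subseteq> T"
  have "(\<integral>x. measure_pmf.prob (P x) \<Gamma> \<partial>measure_pmf (map_pmf f \<nu>))
      = (\<integral>z. measure_pmf.prob (K z) (f -` \<Gamma>) \<partial>measure_pmf \<nu>)"
    by (simp add: integral_map_pmf P measure_map_pmf)
  also have "\<dots> = lam * measure_pmf.prob \<nu> (f -` \<Gamma>)"
    using qsd preimage[OF \<open>\<Gamma> \<subseteq> T\<close>] by (simp add: is_qsd_def)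
  finally show "(\<integral>x. measure_pmf.prob (P x) \<Gamma> \<partial>measure_pmf (map_pmf f \<nu>))
      = lam * measure_pmf.prob (map_pmf f \<nu>) \<Gamma>"
    by (simp add: measure_map_pmf)
qed

lemma prob_less_one_if_mass_outside:
  assumes "x \<notin> A" "0 < pmf p x"
  shows "measure_pmf.prob p A < 1"
proof -
  have "measure_pmf.prob p A \<le> measure_pmf.prob p (UNIV - {x})"
    using assms(1) by (intro measure_pmf.finite_measure_mono) auto
  also have "\<dots> = 1 - pmf p x"
    using measure_pmf.prob_compl[of "{x}" p] by (simp add: measure_pmf_single)
  finally show ?thesis using assms(2) by simp
qed

lemma pois_pos: "0 < m \<Longrightarrow> 0 < pmf (pois m) j"
  by (simp add: pois_def pmf_poisson)

lemma pois_zero_pos: "0 < pmf (pois m) 0"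
  by (simp add: pois_def pmf_poisson)

lemma pois_le:
  assumes "m \<le> M" "0 < M"
  shows "pmf (pois m) j \<le> exp M * pmf (poisson_pmf M) j"
proof (cases "m \<le> 0")
  case True
  then show ?thesis using assms
    by (cases j) (auto simp: pois_def pmf_poisson exp_minus field_simps)
next
  case False
  then have "pmf (pois m) j = m ^ j / fact j * exp (- m)" by (simp add: pois_def pmf_poisson)
  also have "\<dots> \<le> M ^ j / fact j * 1"
    using False assms by (intro mult_mono divide_right_mono power_mono) auto
  also have "\<dots> = exp M * pmf (poisson_pmf M) j"
    using assms by (simp add: pmf_poisson exp_minus field_simps)
  finally show ?thesis .
qed

definition lattice_point :: "real \<Rightarrow> ('k::finite \<Rightarrow> nat) \<Rightarrow> real^'k" where
  "lattice_point eps z = (\<chi> i. eps * real (z i))"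

definition count_kernel :: "real \<Rightarrow> (real^'k \<Rightarrow> real^'k) \<Rightarrow> ('k::finite \<Rightarrow> nat) \<Rightarrow> ('k \<Rightarrow> nat) pmf" where
  "count_kernel eps F z = Pi_pmf UNIV 0 (\<lambda>i. pois (F (lattice_point eps z) $ i / eps))"

lemma npp_kernel_lattice_point:
  "npp_kernel eps F (lattice_point eps z) = map_pmf (lattice_point eps) (count_kernel eps F z)"
  by (simp add: npp_kernel_def count_kernel_def lattice_point_def[abs_def])

lemma pmf_count_kernel:
  "pmf (count_kernel eps F z) w = (\<Prod>i\<in>UNIV. pmf (pois (F (lattice_point eps z) $ i / eps)) (w i))"
  by (simp add: count_kernel_def pmf_Pi)

lemma count_kernel_pos:
  assumes "\<And>i. 0 < F (lattice_point eps z) $ i" "0 < eps"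
  shows "0 < pmf (count_kernel eps F z) w"
  unfolding pmf_count_kernel using assms by (intro prod_pos) (auto intro: pois_pos)

lemma count_kernel_zero_pos: "0 < pmf (count_kernel eps F z) (\<lambda>_. 0)"
  unfolding pmf_count_kernel by (intro prod_pos) (auto intro: pois_zero_pos)

lemma count_kernel_tight:
  fixes F :: "real^'k \<Rightarrow> real^'k"
  assumes "\<And>i. F (lattice_point eps z) $ i / eps \<le> M" "0 < M"
  shows "pmf (count_kernel eps F z) w \<le> exp M ^ CARD('k) * pmf (Pi_pmf UNIV 0 (\<lambda>_. poisson_pmf M)) w"
proof -
  have "pmf (count_kernel eps F z) w \<le> (\<Prod>i\<in>(UNIV::'k set). exp M * pmf (poisson_pmf M) (w i))"
    unfolding pmf_count_kernel using assms by (intro prod_mono conjI pois_le) auto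
  also have "\<dots> = exp M ^ CARD('k) * pmf (Pi_pmf UNIV 0 (\<lambda>_. poisson_pmf M)) w"
    by (simp add: pmf_Pi prod.distrib)
  finally show ?thesis .
qed

lemma lattice_point_in_lattice: "lattice_point eps z \<in> lattice eps"
  by (auto simp: lattice_def lattice_point_def)

lemma lattice_point_in_orthant: "0 \<le> eps \<Longrightarrow> lattice_point eps z \<in> orthant"
  by (simp add: lattice_point_def orthant_def)

lemma lattice_point_zero_in_M0:
  assumes "M0 \<in> {{0}, orthant_boundary}"
  shows "lattice_point eps (\<lambda>_. 0) \<in> M0"
  using assms by (auto simp: lattice_point_def orthant_boundary_def orthant_def vec_eq_iff)

lemma lattice_point_one_notin_M0:
  assumes "M0 \<in> {{0}, orthant_boundary}" "0 < eps"
  shows "lattice_point eps (\<lambda>_. 1) \<notin> M0"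
  using assms by (auto simp: lattice_point_def orthant_boundary_def vec_eq_iff)

lemma poisson_rate_bound:
  fixes F :: "real^'k \<Rightarrow> real^'k"
  assumes "bdd_above ((\<lambda>x. norm (F x)) ` orthant)" "0 < eps"
  shows "\<exists>M>0. \<forall>z i. F (lattice_point eps z) $ i / eps \<le> M"
proof -
  obtain C where C: "\<And>x. x \<in> orthant \<Longrightarrow> norm (F x) \<le> C"
    using assms(1) by (auto simp: bdd_above_def)
  have "norm (F 0) \<le> C" by (rule C) (simp add: orthant_def)
  then have "0 \<le> C" by (meson norm_ge_zero order_trans)
  have "F (lattice_point eps z) $ i / eps \<le> C / eps + 1" for z i
  proof -
    have "norm (F (lattice_point eps z)) \<le> C"
      using assms(2) by (intro C lattice_point_in_orthant) simp
    then have "F (lattice_point eps z) $ i \<le> C"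
      using component_le_norm_cart[of "F (lattice_point eps z)" i] by linarith
    then have "F (lattice_point eps z) $ i / eps \<le> C / eps"
      using assms(2) by (simp add: divide_right_mono)
    then show ?thesis by linarith
  qed
  moreover have "0 < C / eps + 1"
    using \<open>0 \<le> C\<close> assms(2) by (intro add_nonneg_pos divide_nonneg_pos) auto
  ultimately show ?thesis by blast
qed

theorem mainTheorem17:
  fixes F :: "real^'k \<Rightarrow> real^'k" and M0 :: "(real^'k) set" and eps :: real
  assumes F_nonneg: "\<And>x. x \<in> orthant \<Longrightarrow> F x \<in> orthant"
    and F_bdd: "bdd_above ((\<lambda>x. norm (F x)) ` orthant)"
    and M0_cases: "M0 \<in> {{0}, orthant_boundary}"
    and absorbing: "\<And>x. x \<in> lattice eps \<inter> M0 \<Longrightarrow> measure_pmf.prob (npp_kernel eps F x) M0 = 1"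
    and F_pos: "\<And>x i. x \<in> orthant - M0 \<Longrightarrow> F x $ i > 0"
    and eps_pos: "eps > 0"
  shows "\<exists>(\<mu> :: (real^'k) pmf) (lam::real).
           set_pmf \<mu> \<subseteq> lattice eps - M0 \<and> 0 < lam \<and> lam < 1 \<and>
           (\<forall>\<Gamma>. \<Gamma> \<subseteq> lattice eps - M0 \<longrightarrow>
              (\<integral>x. measure_pmf.prob (npp_kernel eps F x) \<Gamma> \<partial>measure_pmf \<mu>)
                = lam * measure_pmf.prob \<mu> \<Gamma>)"
proof -
  obtain M where M_pos: "0 < M" and F_le_M: "\<And>z i. F (lattice_point eps z) $ i / eps \<le> M"
    using poisson_rate_bound[OF F_bdd eps_pos] by blast
  define S where "S = {z. lattice_point eps z \<notin> M0}"
  define g where "g w = exp M ^ CARD('k) * pmf (Pi_pmf UNIV 0 (\<lambda>_. poisson_pmf M)) w"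
    for w :: "'k \<Rightarrow> nat"
  interpret countable_kernel "count_kernel eps F" S g
  proof
    show "S \<noteq> {}" using lattice_point_one_notin_M0[OF M0_cases eps_pos] by (auto simp: S_def)
    show "0 < pmf (count_kernel eps F z) w" if "z \<in> S" "w \<in> S" for z w
      using that F_pos lattice_point_in_orthant[OF less_imp_le[OF eps_pos]] eps_pos
      by (intro count_kernel_pos) (auto simp: S_def)
    show "pmf (count_kernel eps F z) w \<le> g w" if "z \<in> S" for z w
      unfolding g_def by (intro count_kernel_tight F_le_M M_pos)
    show "integrable (count_space UNIV) g"
      unfolding g_def by (intro integrable_mult_right integrable_pmf)
    show "measure_pmf.prob (count_kernel eps F z) S < 1" if "z \<in> S" for z
      using lattice_point_zero_in_M0[OF M0_cases] count_kernel_zero_pos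
      by (intro prob_less_one_if_mass_outside[of "\<lambda>_. 0"]) (auto simp: S_def)
  qed
  obtain \<nu> lam where "is_qsd (count_kernel eps F) S \<nu> lam" using qsd_exists by blast
  then have "is_qsd (npp_kernel eps F) (lattice eps - M0) (map_pmf (lattice_point eps) \<nu>) lam"
    by (rule qsd_transfer) (auto simp: npp_kernel_lattice_point S_def lattice_point_in_lattice)
  then show ?thesis unfolding is_qsd_def by blast
qed

end
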